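(* Let $n\ge 3$ and $h$ be integers with $1\le h\le n-2$, and let $\delta>1$. Let $D$ be the real symmetric $(n-1)\times(n-1)$ block matrix \[ D=\begin{bmatrix}(-3+\delta^2)J_h & -(1+\delta^2)J_{h,n-h-1}\\ -(1+\delta^2)J_{n-h-1,h} & (1-3\delta^2)J_{n-h-1}\end{bmatrix}, \] where $J_{p,q}$ is the $p\times q$ all-ones matrix and $J_p=J_{p,p}$. Then the spectrum of $D$ is $\{[a_2],[0]^{n-3},[a_1]\}$ (exponents denote multiplicities) with $a_2<0<a_1$, where for $i=1,2$ \[ a_i=-2(1-\delta^2)h+\frac{1-3\delta^2}{2}(n-1)+(-1)^{i+1}\sqrt{2(n-1)h(1-\delta^2)(1+\delta^2)+(n-1)^2\left(\frac{1-3\delta^2}{2}\right)^2}. \] *)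

theory Defs
  imports Complex_Main "Jordan_Normal_Form.Char_Poly"
begin

definition Dmat :: "nat \<Rightarrow> nat \<Rightarrow> real \<Rightarrow> real mat" where
  "Dmat n h \<delta> = mat (n - 1) (n - 1) (\<lambda>(i, j).
     if i < h \<and> j < h then -3 + \<delta>^2
     else if h \<le> i \<and> h \<le> j then 1 - 3 * \<delta>^2
     else -(1 + \<delta>^2))"

definition a_val :: "nat \<Rightarrow> nat \<Rightarrow> real \<Rightarrow> nat \<Rightarrow> real" where
  "a_val n h \<delta> i = -2 * (1 - \<delta>^2) * real h + (1 - 3 * \<delta>^2) / 2 * (real n - 1)
     + (-1) ^ (i + 1) * sqrt (2 * (real n - 1) * real h * (1 - \<delta>^2) * (1 + \<delta>^2)
                             + (real n - 1)^2 * ((1 - 3 * \<delta>^2) / 2)^2)"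

end

theory Submission
  imports Defs
begin

(* With U the 0/1 incidence matrix of the two blocks, D = U W has rank two, and Sylvester's
   determinant identity gives x^2 char_poly D = x^(n-1) char_poly (W U), where
   W U = [[h alpha, k gamma], [h gamma, k beta]] is the 2 x 2 quotient matrix of the block
   partition (block sizes h and k = n - 1 - h, block values alpha, beta, gamma).
   Its determinant h k (alpha beta - gamma^2) = -4 h k (delta^2 - 1)^2 is negative, so the two
   remaining eigenvalues, given by the quadratic formula, have opposite signs. *)

lemma sylvester_det_identity:
  fixes U :: "'a::idom mat"
  assumes U: "U \<in> carrier_mat m k" and W: "W \<in> carrier_mat k m"
  shows "x ^ k * det (x \<cdot>\<^sub>m 1\<^sub>m m - U * W) = x ^ m * det (x \<cdot>\<^sub>m 1\<^sub>m k - W * U)"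
proof -
  \<comment> \<open>Reduce the block matrix M = [[x I, U], [W, I]] to triangular form from both sides.\<close>
  define M where "M = four_block_mat (x \<cdot>\<^sub>m 1\<^sub>m m) U W (1\<^sub>m k)"
  have UW: "U * W \<in> carrier_mat m m" and WU: "W * U \<in> carrier_mat k k" using U W by auto
  have A: "x \<cdot>\<^sub>m 1\<^sub>m m - U * W \<in> carrier_mat m m" by (rule minus_carrier_mat[OF UW])
  have B: "x \<cdot>\<^sub>m 1\<^sub>m k - W * U \<in> carrier_mat k k" by (rule minus_carrier_mat[OF WU])
  have M: "M \<in> carrier_mat (m + k) (m + k)" unfolding M_def using U W by auto
  have left: "four_block_mat (1\<^sub>m m) U (0\<^sub>m k m) (1\<^sub>m k) *
      four_block_mat (x \<cdot>\<^sub>m 1\<^sub>m m - U * W) (0\<^sub>m m k) W (1\<^sub>m k) = M"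
    unfolding M_def
    apply (subst mult_four_block_mat[OF one_carrier_mat U zero_carrier_mat one_carrier_mat
          A zero_carrier_mat W one_carrier_mat])
    apply (rule cong_four_block_mat)
    using U W UW by (auto intro!: eq_matI)
  have right: "four_block_mat (1\<^sub>m m) (0\<^sub>m m k) (- W) (x \<cdot>\<^sub>m 1\<^sub>m k) * M =
      four_block_mat (x \<cdot>\<^sub>m 1\<^sub>m m) U (0\<^sub>m k m) (x \<cdot>\<^sub>m 1\<^sub>m k - W * U)"
    unfolding M_def
    apply (subst mult_four_block_mat[OF one_carrier_mat zero_carrier_mat _
          smult_carrier_mat[OF one_carrier_mat] smult_carrier_mat[OF one_carrier_mat] U W one_carrier_mat])
    using W apply simp
    apply (rule cong_four_block_mat)
    using U W WU by (auto intro!: eq_matI)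
  have "det (four_block_mat (1\<^sub>m m) U (0\<^sub>m k m) (1\<^sub>m k)) = 1"
    by (subst det_four_block_mat_lower_left_zero[OF one_carrier_mat U refl one_carrier_mat]) simp
  moreover have "det (four_block_mat (x \<cdot>\<^sub>m 1\<^sub>m m - U * W) (0\<^sub>m m k) W (1\<^sub>m k)) =
      det (x \<cdot>\<^sub>m 1\<^sub>m m - U * W)"
    by (subst det_four_block_mat_upper_right_zero[OF A refl W one_carrier_mat]) simp
  ultimately have det_M: "det M = det (x \<cdot>\<^sub>m 1\<^sub>m m - U * W)"
    unfolding left[symmetric] using A U W by (subst det_mult[of _ "m + k"]) auto
  have "det (four_block_mat (1\<^sub>m m) (0\<^sub>m m k) (- W) (x \<cdot>\<^sub>m 1\<^sub>m k)) = x ^ k"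
    by (subst det_four_block_mat_upper_right_zero[OF one_carrier_mat refl _
          smult_carrier_mat[OF one_carrier_mat]]) (use W in auto)
  moreover have "det (four_block_mat (x \<cdot>\<^sub>m 1\<^sub>m m) U (0\<^sub>m k m) (x \<cdot>\<^sub>m 1\<^sub>m k - W * U)) =
      x ^ m * det (x \<cdot>\<^sub>m 1\<^sub>m k - W * U)"
    by (subst det_four_block_mat_lower_left_zero[OF smult_carrier_mat[OF one_carrier_mat] U refl B]) simp
  ultimately have "x ^ k * det M = x ^ m * det (x \<cdot>\<^sub>m 1\<^sub>m k - W * U)"
    using arg_cong[OF right, of det] M W by (subst (asm) det_mult[of _ "m + k"]) auto
  then show ?thesis unfolding det_M .
qed

lemma semiring_hom_const_poly: "semiring_hom (\<lambda>a :: 'a :: comm_semiring_1. [:a:])"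
  by unfold_locales (simp_all add: mult.commute)

lemma char_poly_matrix_mult:
  fixes U :: "'a::idom mat"
  assumes "U \<in> carrier_mat m k" and "W \<in> carrier_mat k m"
  shows "char_poly_matrix (U * W) =
    [:0, 1:] \<cdot>\<^sub>m 1\<^sub>m m - map_mat (\<lambda>a. [:a:]) U * map_mat (\<lambda>a. [:a:]) W"
proof -
  have "map_mat (\<lambda>a. [:a:]) (U * W) = map_mat (\<lambda>a. [:a:]) U * map_mat (\<lambda>a. [:a:]) W"
    using semiring_hom.mat_hom_mult[OF semiring_hom_const_poly] assms .
  moreover have "char_poly_matrix A = [:0, 1:] \<cdot>\<^sub>m 1\<^sub>m (dim_row A) - map_mat (\<lambda>a. [:a:]) A" for A :: "'a mat"
    unfolding char_poly_matrix_def by (rule eq_matI) auto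
  ultimately show ?thesis using assms by simp
qed

lemma char_poly_mult_swap:
  fixes U :: "'a::idom mat"
  assumes U: "U \<in> carrier_mat m k" and W: "W \<in> carrier_mat k m"
  shows "[:0, 1:] ^ k * char_poly (U * W) = [:0, 1:] ^ m * char_poly (W * U)"
  unfolding char_poly_def char_poly_matrix_mult[OF U W] char_poly_matrix_mult[OF W U]
  by (rule sylvester_det_identity) (use U W in auto)

definition blow_up_mat :: "nat \<Rightarrow> (nat \<Rightarrow> nat) \<Rightarrow> 'a mat \<Rightarrow> 'a mat" where
  "blow_up_mat m p B = mat m m (\<lambda>(i, j). B $$ (p i, p j))"

lemma char_poly_blow_up_mat:
  fixes B :: "'a::idom mat"
  assumes "\<forall>i<m. p i < r"
  shows "[:0, 1:] ^ r * char_poly (blow_up_mat m p B) =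
    [:0, 1:] ^ m * char_poly (mat r r (\<lambda>(k, l). B $$ (k, l) * of_nat (card {j. j < m \<and> p j = l})))"
proof -
  define U :: "'a mat" where "U = mat m r (\<lambda>(i, l). if l = p i then 1 else 0)"
  define W where "W = mat r m (\<lambda>(k, j). B $$ (k, p j))"
  have U: "U \<in> carrier_mat m r" and W: "W \<in> carrier_mat r m"
    unfolding U_def W_def by simp_all
  have "blow_up_mat m p B = U * W"
  proof (rule eq_matI)
    fix i j assume "i < dim_row (U * W)" "j < dim_col (U * W)"
    then have "i < m" "j < m" using U W by simp_all
    then show "blow_up_mat m p B $$ (i, j) = (U * W) $$ (i, j)"
      using assms unfolding blow_up_mat_def U_def W_def
      by (simp add: scalar_prod_def if_distrib[of "\<lambda>x. x * _"] sum.delta cong: if_cong)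
  qed (use U W in \<open>simp_all add: blow_up_mat_def\<close>)
  moreover have "mat r r (\<lambda>(k, l). B $$ (k, l) * of_nat (card {j. j < m \<and> p j = l})) = W * U"
    (is "?Q = _")
  proof (rule eq_matI)
    fix k l assume "k < dim_row (W * U)" "l < dim_col (W * U)"
    then have "k < r" "l < r" using U W by simp_all
    then have "(W * U) $$ (k, l) = (\<Sum>j\<in>{0..<m}. if p j = l then B $$ (k, l) else 0)"
      unfolding U_def W_def by (auto simp: scalar_prod_def intro!: sum.cong)
    also have "\<dots> = (\<Sum>j\<in>{j \<in> {0..<m}. p j = l}. B $$ (k, l))"
      by (rule sum.inter_filter[symmetric]) simp
    also have "{j \<in> {0..<m}. p j = l} = {j. j < m \<and> p j = l}"
      by auto
    finally show "?Q $$ (k, l) = (W * U) $$ (k, l)"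
      using \<open>k < r\<close> \<open>l < r\<close> by (simp add: mult.commute)
  qed (use U W in simp_all)
  ultimately show ?thesis
    using char_poly_mult_swap[OF U W] by simp
qed

lemma det_dim_2:
  assumes "A \<in> carrier_mat 2 2"
  shows "det A = A $$ (0, 0) * A $$ (1, 1) - A $$ (0, 1) * A $$ (1, 0)"
proof -
  have "det A = (\<Sum>j<2. A $$ (0, j) * cofactor A 0 j)"
    using laplace_expansion_row[OF assms, of 0] by simp
  also have "\<dots> = A $$ (0, 0) * cofactor A 0 0 + A $$ (0, 1) * cofactor A 0 1"
    by (simp add: numeral_2_eq_2)
  finally show ?thesis
    using assms by (simp add: cofactor_def det_def'[of _ 1] mat_delete_def)
qed

lemma char_poly_dim_2:
  fixes A :: "'a::comm_ring_1 mat"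
  assumes "A \<in> carrier_mat 2 2"
  shows "char_poly A =
    [:A $$ (0, 0) * A $$ (1, 1) - A $$ (0, 1) * A $$ (1, 0), - (A $$ (0, 0) + A $$ (1, 1)), 1:]"
  using assms unfolding char_poly_def det_dim_2[OF char_poly_matrix_closed[OF assms]]
  by (simp add: char_poly_matrix_def numeral_2_eq_2 algebra_simps)

definition two_block_mat :: "nat \<Rightarrow> nat \<Rightarrow> 'a \<Rightarrow> 'a \<Rightarrow> 'a \<Rightarrow> 'a mat" where
  "two_block_mat m h a b c = mat m m (\<lambda>(i, j).
     if i < h \<and> j < h then a else if h \<le> i \<and> h \<le> j then b else c)"

lemma char_poly_two_block_mat:
  fixes a b c :: "'a::idom"
  assumes "h \<le> m" and "2 \<le> m"
  shows "char_poly (two_block_mat m h a b c) = [:0, 1:] ^ (m - 2) *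
    [:of_nat h * of_nat (m - h) * (a * b - c^2), - (of_nat h * a + of_nat (m - h) * b), 1:]"
    (is "_ = _ * ?quadratic")
proof -
  define p :: "nat \<Rightarrow> nat" where "p = (\<lambda>i. if i < h then 0 else 1)"
  define B where "B = mat 2 2 (\<lambda>(k, l). if k = 0 \<and> l = 0 then a else if k = 1 \<and> l = 1 then b else c)"
  define Q where "Q = mat 2 2 (\<lambda>(k, l). B $$ (k, l) * of_nat (card {j. j < m \<and> p j = l}))"
  have "two_block_mat m h a b c = blow_up_mat m p B"
    unfolding two_block_mat_def blow_up_mat_def p_def B_def by (rule eq_matI) auto
  then have swap: "[:0, 1:] ^ 2 * char_poly (two_block_mat m h a b c) = [:0, 1:] ^ m * char_poly Q"
    unfolding Q_def by (simp add: char_poly_blow_up_mat p_def)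
  have "{j. j < m \<and> p j = 0} = {..<h}" and "{j. j < m \<and> p j = 1} = {h..<m}"
    using assms by (auto simp: p_def)
  then have entries: "Q $$ (0, 0) = a * of_nat h" "Q $$ (1, 1) = b * of_nat (m - h)"
    "Q $$ (0, 1) = c * of_nat (m - h)" "Q $$ (1, 0) = c * of_nat h"
    by (simp_all add: Q_def B_def)
  have "Q \<in> carrier_mat 2 2"
    by (simp add: Q_def)
  then have "char_poly Q = ?quadratic"
    unfolding char_poly_dim_2[OF \<open>Q \<in> carrier_mat 2 2\<close>] entries
    by (simp add: power2_eq_square algebra_simps)
  moreover have "m = 2 + (m - 2)"
    using assms by simp
  ultimately have "[:0, 1:] ^ 2 * char_poly (two_block_mat m h a b c) =
      [:0, 1:] ^ 2 * ([:0, 1:] ^ (m - 2) * ?quadratic)"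
    using swap by (metis power_add mult.assoc)
  then show ?thesis
    by (subst (asm) mult_left_cancel) simp_all
qed

lemma char_poly_Dmat:
  assumes "3 \<le> n" and "h \<le> n - 1"
  shows "char_poly (Dmat n h \<delta>) = [:0, 1:] ^ (n - 3) *
    [:- 4 * real h * real (n - 1 - h) * (\<delta>^2 - 1)^2,
      - (real h * (-3 + \<delta>^2) + real (n - 1 - h) * (1 - 3 * \<delta>^2)), 1:]"
proof -
  have "char_poly (Dmat n h \<delta>) = [:0, 1:] ^ (n - 1 - 2) *
    [:real h * real (n - 1 - h) * ((-3 + \<delta>^2) * (1 - 3 * \<delta>^2) - (-(1 + \<delta>^2))^2),
      - (real h * (-3 + \<delta>^2) + real (n - 1 - h) * (1 - 3 * \<delta>^2)), 1:]"
    unfolding Dmat_def two_block_mat_def[symmetric]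
    by (rule char_poly_two_block_mat) (use assms in simp_all)
  moreover have "(-3 + \<delta>^2) * (1 - 3 * \<delta>^2) - (-(1 + \<delta>^2))^2 = - 4 * (\<delta>^2 - 1)^2"
    by (simp add: power2_eq_square algebra_simps)
  ultimately show ?thesis
    by (simp add: numeral_3_eq_3 mult_ac)
qed

lemma monic_quadratic_factor:
  fixes t d :: real
  assumes "d \<le> t^2 / 4"
  shows "[:d, -t, 1:] = [:- (t/2 - sqrt (t^2/4 - d)), 1:] * [:- (t/2 + sqrt (t^2/4 - d)), 1:]"
proof -
  have "sqrt (t^2/4 - d) ^ 2 = t^2/4 - d"
    using assms by simp
  then show ?thesis
    by (simp add: power2_eq_square algebra_simps)
qed

lemma monic_quadratic_roots_sign:
  fixes t d :: real
  assumes "d < 0"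
  shows "t/2 - sqrt (t^2/4 - d) < 0" and "0 < t/2 + sqrt (t^2/4 - d)"
proof -
  have "\<bar>t/2\<bar> = sqrt ((t/2)^2)"
    by simp
  also have "\<dots> < sqrt (t^2/4 - d)"
    using assms by (simp add: power_divide)
  finally show "t/2 - sqrt (t^2/4 - d) < 0" and "0 < t/2 + sqrt (t^2/4 - d)"
    by linarith+
qed

lemma a_val_eq_roots:
  fixes n h :: nat and \<delta> :: real
  assumes "h < n"
  defines "t \<equiv> real h * (-3 + \<delta>^2) + real (n - 1 - h) * (1 - 3 * \<delta>^2)"
    and "d \<equiv> - 4 * real h * real (n - 1 - h) * (\<delta>^2 - 1)^2"
  shows "a_val n h \<delta> 1 = t/2 + sqrt (t^2/4 - d)" and "a_val n h \<delta> 2 = t/2 - sqrt (t^2/4 - d)"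
proof -
  have k: "real (n - 1 - h) = real n - 1 - real h"
    using assms by (simp add: of_nat_diff)
  have "t/2 = -2 * (1 - \<delta>^2) * real h + (1 - 3 * \<delta>^2) / 2 * (real n - 1)"
    unfolding t_def k by (simp add: field_simps)
  moreover have "t^2/4 - d = 2 * (real n - 1) * real h * (1 - \<delta>^2) * (1 + \<delta>^2)
      + (real n - 1)^2 * ((1 - 3 * \<delta>^2) / 2)^2"
    unfolding t_def d_def k by (simp add: power2_eq_square field_simps)
  ultimately show "a_val n h \<delta> 1 = t/2 + sqrt (t^2/4 - d)" and "a_val n h \<delta> 2 = t/2 - sqrt (t^2/4 - d)"
    unfolding a_val_def by simp_all
qed

theorem mainTheorem4:
  fixes n h :: nat and \<delta> :: real
  assumes "n \<ge> 3" and "1 \<le> h" and "h \<le> n - 2" and "\<delta> > 1"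
  shows "char_poly (Dmat n h \<delta>) =
           [:- a_val n h \<delta> 2, 1:] * [:0, 1:] ^ (n - 3) * [:- a_val n h \<delta> 1, 1:]
         \<and> a_val n h \<delta> 2 < 0 \<and> 0 < a_val n h \<delta> 1"
proof -
  define t where "t = real h * (-3 + \<delta>^2) + real (n - 1 - h) * (1 - 3 * \<delta>^2)"
  define d where "d = - 4 * real h * real (n - 1 - h) * (\<delta>^2 - 1)^2"
  have "\<delta>^2 \<noteq> 1"
    using one_less_power[OF \<open>\<delta> > 1\<close>, of 2] by simp
  moreover have "n - 1 - h > 0"
    using assms by simp
  ultimately have "d < 0"
    using assms unfolding d_def by simp
  then have "d \<le> t^2/4"
    using zero_le_power2[of t] by linarith
  have a1: "a_val n h \<delta> 1 = t/2 + sqrt (t^2/4 - d)" and a2: "a_val n h \<delta> 2 = t/2 - sqrt (t^2/4 - d)"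
    using a_val_eq_roots[of h n \<delta>] assms unfolding t_def d_def by simp_all
  have "char_poly (Dmat n h \<delta>) = [:0, 1:] ^ (n - 3) * [:d, -t, 1:]"
    using char_poly_Dmat[of n h \<delta>] assms unfolding t_def d_def by simp
  also have "\<dots> = [:- a_val n h \<delta> 2, 1:] * [:0, 1:] ^ (n - 3) * [:- a_val n h \<delta> 1, 1:]"
    unfolding a1 a2 monic_quadratic_factor[OF \<open>d \<le> t^2/4\<close>] by (simp only: ac_simps)
  finally show ?thesis
    using monic_quadratic_roots_sign[OF \<open>d < 0\<close>] unfolding a1 a2 by simp
qed

end
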